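(* Let $K \ge 1$ be an integer and let $\Phi \in \mathbb{R}^{M \times N}$ satisfy the restricted isometry property of order $K+1$ with isometry constant $\delta < \frac{1}{3}$. Let $x \in \mathbb{R}^N$ with $\|x\|_0 \le K$, and let $x'(1), x'(2), \dots$ denote the entries of $x$ ordered by magnitude, $|x'(1)| \ge |x'(2)| \ge \cdots \ge |x'(K)| \ge 0$, with $x'(K+1) = \cdots = x'(N) = 0$. Suppose that for all $j \in \{1, 2, \dots, K-1\}$, $$\frac{|x'(j)|}{|x'(j+1)|} \ge \alpha, \qquad\text{where}\qquad \alpha > \frac{1 + 2\frac{\delta}{1-\delta}\sqrt{K-1}}{1 - 2\frac{\delta}{1-\delta}}.$$ Then Orthogonal Matching Pursuit applied to $\Phi$ and $y = \Phi x$ recovers $x$ exactly in $K$ iterations, i.e. $x^K = x$.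
   Context: For $x \in \mathbb{R}^N$, $\|x\|_0 := |\mathrm{supp}(x)|$ is the number of nonzero entries. A matrix $\Phi \in \mathbb{R}^{M\times N}$ satisfies the restricted isometry property (RIP) of order $K$ with isometry constant $\delta \in (0,1)$ if $(1-\delta)\|x\|_2^2 \le \|\Phi x\|_2^2 \le (1+\delta)\|x\|_2^2$ for all $x \in \mathbb{R}^N$ with $\|x\|_0 \le K$. Orthogonal Matching Pursuit (OMP) with input $\Phi$ and $y \in \mathbb{R}^M$: initialize $r^0 = y$, $x^0 = 0$, $\Lambda^0 = \emptyset$, $\ell = 0$. Each iteration: compute $h^\ell = \Phi^T r^\ell$; set $\Lambda^{\ell+1} = \Lambda^\ell \cup \{j^*\}$ where $j^*$ is an index maximizing $|h^\ell(j)|$ (if several maxima exist, exactly one is chosen); set $x^{\ell+1} = \arg\min_{z:\, \mathrm{supp}(z) \subseteq \Lambda^{\ell+1}} \|y - \Phi z\|_2$ and $r^{\ell+1} = y - \Phi x^{\ell+1}$; increment $\ell$. The output after $\ell$ iterations is $x^\ell$. *)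

theory Defs
  imports "Jordan_Normal_Form.Matrix"
begin

definition supp_vec :: "real vec \<Rightarrow> nat set" where
  "supp_vec v = {i. i < dim_vec v \<and> v $ i \<noteq> 0}"

definition l0 :: "real vec \<Rightarrow> nat" where
  "l0 v = card (supp_vec v)"

definition sqnorm :: "real vec \<Rightarrow> real" where
  "sqnorm v = (\<Sum>i<dim_vec v. (v $ i)^2)"

definition RIP :: "real mat \<Rightarrow> nat \<Rightarrow> real \<Rightarrow> bool" where
  "RIP \<Phi> K \<delta> \<longleftrightarrow> 0 < \<delta> \<and> \<delta> < 1 \<and>
     (\<forall>x \<in> carrier_vec (dim_col \<Phi>). l0 x \<le> K \<longrightarrow>
        (1 - \<delta>) * sqnorm x \<le> sqnorm (\<Phi> *\<^sub>v x) \<and>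
        sqnorm (\<Phi> *\<^sub>v x) \<le> (1 + \<delta>) * sqnorm x)"

definition mag_ord :: "real vec \<Rightarrow> nat \<Rightarrow> real" where
  "mag_ord x j = (if 1 \<le> j \<and> j \<le> dim_vec x
     then rev (sort (map abs (list_of_vec x))) ! (j - 1) else 0)"

definition is_lsq :: "real mat \<Rightarrow> real vec \<Rightarrow> nat set \<Rightarrow> real vec \<Rightarrow> bool" where
  "is_lsq \<Phi> y Lam z \<longleftrightarrow> z \<in> carrier_vec (dim_col \<Phi>) \<and> supp_vec z \<subseteq> Lam \<and>
     (\<forall>w \<in> carrier_vec (dim_col \<Phi>). supp_vec w \<subseteq> Lam \<longrightarrow>
        sqnorm (y - \<Phi> *\<^sub>v z) \<le> sqnorm (y - \<Phi> *\<^sub>v w))"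

text \<open>One OMP iteration from (Lam, xl) to (Lam', xl'), allowing any choice among maximizers
  (and any minimizer of the least-squares problem).\<close>
definition omp_step :: "real mat \<Rightarrow> real vec \<Rightarrow> nat set \<Rightarrow> real vec \<Rightarrow> nat set \<Rightarrow> real vec \<Rightarrow> bool" where
  "omp_step \<Phi> y Lam xl Lam' xl' \<longleftrightarrow>
     (let r = y - \<Phi> *\<^sub>v xl; h = transpose_mat \<Phi> *\<^sub>v r in
      \<exists>j < dim_col \<Phi>. (\<forall>i < dim_col \<Phi>. \<bar>h $ i\<bar> \<le> \<bar>h $ j\<bar>) \<and>
        Lam' = insert j Lam \<and> is_lsq \<Phi> y Lam' xl')"

definition omp_run :: "real mat \<Rightarrow> real vec \<Rightarrow> nat \<Rightarrow> (nat \<Rightarrow> nat set) \<Rightarrow> (nat \<Rightarrow> real vec) \<Rightarrow> bool" where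
  "omp_run \<Phi> y n Lam xs \<longleftrightarrow> Lam 0 = {} \<and> xs 0 = 0\<^sub>v (dim_col \<Phi>) \<and>
     (\<forall>l < n. omp_step \<Phi> y (Lam l) (xs l) (Lam (Suc l)) (xs (Suc l)))"

end

(* Suppose the indices Lam chosen so far lie in the support T
   of x. The least-squares iterate x' leaves the residual Phi z with z = x - x', which agrees
   with x off Lam and vanishes off T. By the RIP the correlations Phi^T Phi z are entrywise
   within delta ||z|| of z, and least-squares minimality together with the RIP gives
   delta ||z|| <= delta / (1 - delta) ||x restricted to T - Lam||. The ratio hypothesis bounds
   this norm by (1 + sqrt (K - 1) / alpha) a, where a is the largest remaining magnitude, and the
   threshold on alpha makes the resulting error E smaller than a / 2. Hence the correlation
   exceeds E at the largest remaining index, is at most E outside T and vanishes on Lam, so OMP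
   picks a new index of T. After K iterations T is covered, and least squares over at most K
   indices recovers x because the RIP makes Phi injective on such vectors. *)

theory Submission
  imports Defs "HOL-Combinatorics.List_Permutation"
begin

section \<open>Magnitudes in decreasing order\<close>

definition abs_desc :: "real vec \<Rightarrow> real list" where
  "abs_desc x = rev (sort (map abs (list_of_vec x)))"

definition magnitudes_separated :: "real \<Rightarrow> real vec \<Rightarrow> bool" where
  "magnitudes_separated \<alpha> x \<longleftrightarrow> (\<forall>i < dim_vec x. \<forall>k < dim_vec x.
     i \<noteq> k \<longrightarrow> x $ i \<noteq> 0 \<longrightarrow> \<bar>x $ i\<bar> \<le> \<bar>x $ k\<bar> \<longrightarrow> \<alpha> * \<bar>x $ i\<bar> \<le> \<bar>x $ k\<bar>)"

lemma length_abs_desc [simp]: "length (abs_desc x) = dim_vec x"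
  by (simp add: abs_desc_def)

lemma abs_desc_nonneg: "q < dim_vec x \<Longrightarrow> 0 \<le> abs_desc x ! q"
proof -
  assume "q < dim_vec x"
  then have "abs_desc x ! q \<in> set (abs_desc x)" by simp
  then show ?thesis by (auto simp: abs_desc_def)
qed

lemma abs_desc_antimono: "p \<le> q \<Longrightarrow> q < dim_vec x \<Longrightarrow> abs_desc x ! q \<le> abs_desc x ! p"
proof -
  assume pq: "p \<le> q" "q < dim_vec x"
  have "sorted_wrt (\<ge>) (abs_desc x)" by (simp add: abs_desc_def sorted_wrt_rev)
  then show ?thesis using pq by (cases "p = q") (auto simp: sorted_wrt_iff_nth_less)
qed

lemma mag_ord_abs_desc: "1 \<le> j \<Longrightarrow> j \<le> dim_vec x \<Longrightarrow> mag_ord x j = abs_desc x ! (j - 1)"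
  by (simp add: mag_ord_def abs_desc_def)

lemma abs_desc_permutes_entries:
  obtains f where "bij_betw f {..<dim_vec x} {..<dim_vec x}"
    and "\<And>i. i < dim_vec x \<Longrightarrow> abs_desc x ! f i = \<bar>x $ i\<bar>"
proof -
  have "map abs (list_of_vec x) <~~> abs_desc x" by (simp add: abs_desc_def)
  from permutation_Ex_bij[OF this] obtain f
    where "bij_betw f {..<dim_vec x} {..<dim_vec x}"
      and "\<forall>i<dim_vec x. \<bar>x $ i\<bar> = abs_desc x ! f i"
    by auto
  then show thesis by (intro that) auto
qed

lemma abs_desc_pos_less_l0:
  assumes q: "q < dim_vec x" and pos: "0 < abs_desc x ! q"
  shows "q < l0 x"
proof -
  obtain f where f: "bij_betw f {..<dim_vec x} {..<dim_vec x}"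
    and fx: "\<And>i. i < dim_vec x \<Longrightarrow> abs_desc x ! f i = \<bar>x $ i\<bar>"
    using abs_desc_permutes_entries[of x] by blast
  have "{..q} \<subseteq> f ` supp_vec x"
  proof
    fix r assume "r \<in> {..q}"
    then have r: "r \<le> q" "r < dim_vec x" using q by auto
    then obtain i where i: "i < dim_vec x" "f i = r"
      using f by (metis bij_betw_iff_bijections lessThan_iff)
    have "0 < \<bar>x $ i\<bar>" using fx[OF i(1)] i(2) abs_desc_antimono[OF r(1) q] pos by simp
    then show "r \<in> f ` supp_vec x" using i by (auto simp: supp_vec_def)
  qed
  moreover have "finite (supp_vec x)" by (simp add: supp_vec_def)
  ultimately have "card {..q} \<le> card (supp_vec x)"
    by (meson card_image_le card_mono finite_imageI order_trans)
  then show ?thesis by (simp add: l0_def)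
qed

lemma abs_desc_ratio:
  assumes ratio: "\<forall>j \<in> {1..K-1}. \<bar>mag_ord x j\<bar> \<ge> \<alpha> * \<bar>mag_ord x (j + 1)\<bar>"
    and l0: "l0 x \<le> K" and \<alpha>: "0 \<le> \<alpha>"
    and pq: "p < q" "q < dim_vec x" and pos: "0 < abs_desc x ! q"
  shows "\<alpha> * abs_desc x ! q \<le> abs_desc x ! p"
proof -
  have "Suc p \<in> {1..K-1}" using abs_desc_pos_less_l0[OF pq(2) pos] pq l0 by simp
  then have "\<alpha> * \<bar>mag_ord x (Suc p + 1)\<bar> \<le> \<bar>mag_ord x (Suc p)\<bar>" using ratio by blast
  then have "\<alpha> * abs_desc x ! Suc p \<le> abs_desc x ! p"
    using pq abs_desc_nonneg[of p x] abs_desc_nonneg[of "Suc p" x] by (simp add: mag_ord_abs_desc)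
  moreover have "abs_desc x ! q \<le> abs_desc x ! Suc p" using pq by (intro abs_desc_antimono) auto
  ultimately show ?thesis using \<alpha> by (meson mult_left_mono order_trans)
qed

lemma mag_ord_ratio_imp_separated:
  assumes ratio: "\<forall>j \<in> {1..K-1}. \<bar>mag_ord x j\<bar> \<ge> \<alpha> * \<bar>mag_ord x (j + 1)\<bar>"
    and l0: "l0 x \<le> K" and \<alpha>: "0 \<le> \<alpha>"
  shows "magnitudes_separated \<alpha> x"
  unfolding magnitudes_separated_def
proof (intro allI impI)
  fix i k assume ik: "i < dim_vec x" "k < dim_vec x" "i \<noteq> k" "x $ i \<noteq> 0" "\<bar>x $ i\<bar> \<le> \<bar>x $ k\<bar>"
  obtain f where f: "bij_betw f {..<dim_vec x} {..<dim_vec x}"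
    and fx: "\<And>i. i < dim_vec x \<Longrightarrow> abs_desc x ! f i = \<bar>x $ i\<bar>"
    using abs_desc_permutes_entries[of x] by blast
  have "f i \<noteq> f k" "f i < dim_vec x" "f k < dim_vec x"
    using f ik by (auto simp: bij_betw_def inj_on_def)
  then consider "f k < f i" | "f i < f k" by linarith
  then show "\<alpha> * \<bar>x $ i\<bar> \<le> \<bar>x $ k\<bar>"
  proof cases
    case 1
    then show ?thesis
      using abs_desc_ratio[OF ratio l0 \<alpha> 1 \<open>f i < dim_vec x\<close>] fx ik by simp
  next
    case 2
    \<comment> \<open>possible only if \<open>\<bar>x $ i\<bar> = \<bar>x $ k\<bar>\<close>\<close>
    have "\<alpha> * \<bar>x $ k\<bar> \<le> \<bar>x $ i\<bar>"
      using abs_desc_ratio[OF ratio l0 \<alpha> 2 \<open>f k < dim_vec x\<close>] fx ik by simp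
    moreover have "\<alpha> * \<bar>x $ i\<bar> \<le> \<alpha> * \<bar>x $ k\<bar>" using ik \<alpha> by (simp add: mult_left_mono)
    ultimately show ?thesis using ik by linarith
  qed
qed

section \<open>Squared norms and the restricted isometry property\<close>

lemma nonneg_quadratic_imp_discrim_le:
  fixes a b c :: real
  assumes a: "0 \<le> a" and nonneg: "\<And>s. 0 \<le> a * s\<^sup>2 + b * s + c"
  shows "b\<^sup>2 \<le> 4 * a * c"
proof (cases "a = 0")
  case True
  have "b = 0"
  proof (rule ccontr)
    assume "b \<noteq> 0"
    then show False using nonneg[of "- (\<bar>c\<bar> + 1) / b"] True by simp
  qed
  then show ?thesis using True by simp
next
  case False
  have "0 \<le> a * (- b / (2 * a))\<^sup>2 + b * (- b / (2 * a)) + c" by (rule nonneg)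
  also have "\<dots> = (4 * a * c - b\<^sup>2) / (4 * a)"
    using False by (simp add: field_simps power2_eq_square)
  finally show ?thesis using a False by (simp add: zero_le_divide_iff)
qed

lemma sqnorm_eq_scalar_prod: "sqnorm v = v \<bullet> v"
  unfolding sqnorm_def scalar_prod_def by (simp add: atLeast0LessThan power2_eq_square)

lemma sqnorm_nonneg: "0 \<le> sqnorm v"
  unfolding sqnorm_def by (simp add: sum_nonneg)

lemma sqnorm_eq_0_imp_zero:
  assumes "v \<in> carrier_vec n" "sqnorm v = 0"
  shows "v = 0\<^sub>v n"
proof (rule eq_vecI)
  fix i assume "i < dim_vec (0\<^sub>v n)"
  then have "i \<in> {..<dim_vec v}" using assms(1) by simp
  moreover have "\<forall>k\<in>{..<dim_vec v}. (v $ k)\<^sup>2 = 0"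
    using assms(2) unfolding sqnorm_def by (subst sum_nonneg_eq_0_iff[symmetric]) auto
  ultimately show "v $ i = 0\<^sub>v n $ i" using assms(1) by auto
qed (use assms in simp)

lemma sqnorm_smult_add:
  assumes "a \<in> carrier_vec n" "b \<in> carrier_vec n"
  shows "sqnorm (s \<cdot>\<^sub>v a + b) = s\<^sup>2 * sqnorm a + 2 * s * (a \<bullet> b) + sqnorm b"
  using assms
  by (simp add: sqnorm_eq_scalar_prod add_scalar_prod_distrib[of _ n] scalar_prod_add_distrib[of _ n]
      comm_scalar_prod[of b n a] power2_eq_square algebra_simps)

lemma sqnorm_unit_vec: "j < n \<Longrightarrow> sqnorm (unit_vec n j :: real vec) = 1"
  by (simp add: sqnorm_eq_scalar_prod)

lemma supp_vec_smult_add: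
  "a \<in> carrier_vec n \<Longrightarrow> b \<in> carrier_vec n \<Longrightarrow> supp_vec (s \<cdot>\<^sub>v a + b) \<subseteq> supp_vec a \<union> supp_vec b"
  unfolding supp_vec_def by auto

lemma supp_vec_minus:
  "a \<in> carrier_vec n \<Longrightarrow> b \<in> carrier_vec n \<Longrightarrow> supp_vec (a - b) \<subseteq> supp_vec a \<union> supp_vec b"
  unfolding supp_vec_def by auto

lemma supp_vec_unit_vec: "j < n \<Longrightarrow> supp_vec (unit_vec n j :: real vec) = {j}"
  unfolding supp_vec_def by (auto split: if_splits)

lemma supp_vec_empty_imp_zero: "v \<in> carrier_vec n \<Longrightarrow> supp_vec v = {} \<Longrightarrow> v = 0\<^sub>v n"
  unfolding supp_vec_def by (intro eq_vecI) auto

lemma l0_le_card: "supp_vec v \<subseteq> S \<Longrightarrow> finite S \<Longrightarrow> l0 v \<le> card S"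
  unfolding l0_def by (rule card_mono)

lemma mult_mat_vec_unit_vec:
  fixes \<Phi> :: "'a :: semiring_1 mat"
  assumes "\<Phi> \<in> carrier_mat M N" "j < N"
  shows "\<Phi> *\<^sub>v unit_vec N j = col \<Phi> j"
  using assms by (intro eq_vecI) auto

lemma index_transpose_mult_mat_vec:
  fixes \<Phi> :: "'a :: comm_semiring_1 mat"
  assumes "\<Phi> \<in> carrier_mat M N" "i < N"
  shows "(transpose_mat \<Phi> *\<^sub>v r) $ i = (\<Phi> *\<^sub>v unit_vec N i) \<bullet> r"
  using assms by (simp add: mult_mat_vec_unit_vec)

lemma RIP_sqnorm_bounds:
  assumes rip: "RIP \<Phi> m \<delta>" and v: "v \<in> carrier_vec (dim_col \<Phi>)"
    and S: "supp_vec v \<subseteq> S" "finite S" "card S \<le> m"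
  shows "(1 - \<delta>) * sqnorm v \<le> sqnorm (\<Phi> *\<^sub>v v)" "sqnorm (\<Phi> *\<^sub>v v) \<le> (1 + \<delta>) * sqnorm v"
  using rip v l0_le_card[OF S(1,2)] S(3) unfolding RIP_def by auto

lemma RIP_scalar_prod_bound:
  assumes rip: "RIP \<Phi> m \<delta>" and \<Phi>: "\<Phi> \<in> carrier_mat M N"
    and ab: "a \<in> carrier_vec N" "b \<in> carrier_vec N"
    and S: "supp_vec a \<subseteq> S" "supp_vec b \<subseteq> S" "finite S" "card S \<le> m"
  shows "\<bar>(\<Phi> *\<^sub>v a) \<bullet> (\<Phi> *\<^sub>v b) - a \<bullet> b\<bar> \<le> \<delta> * sqrt (sqnorm a) * sqrt (sqnorm b)"
proof -
  have \<delta>: "0 < \<delta>" using rip unfolding RIP_def by simp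
  have \<Phi>ab: "\<Phi> *\<^sub>v a \<in> carrier_vec M" "\<Phi> *\<^sub>v b \<in> carrier_vec M" using \<Phi> ab by auto
  define E where "E = (\<Phi> *\<^sub>v a) \<bullet> (\<Phi> *\<^sub>v b) - a \<bullet> b"
  \<comment> \<open>the RIP applied to \<open>s \<cdot>\<^sub>v a + b\<close> and \<open>(- s) \<cdot>\<^sub>v a + b\<close> yields a quadratic in \<open>s\<close>
    that is nonnegative, so its discriminant bounds \<open>E\<close>\<close>
  have "0 \<le> (\<delta> * sqnorm a) * s\<^sup>2 + (- 2 * E) * s + \<delta> * sqnorm b" for s
  proof -
    have comb: "s \<cdot>\<^sub>v a + b \<in> carrier_vec (dim_col \<Phi>)" "supp_vec (s \<cdot>\<^sub>v a + b) \<subseteq> S"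
      using ab \<Phi> S supp_vec_smult_add[OF ab, of s] by auto
    have comb': "(-s) \<cdot>\<^sub>v a + b \<in> carrier_vec (dim_col \<Phi>)" "supp_vec ((-s) \<cdot>\<^sub>v a + b) \<subseteq> S"
      using ab \<Phi> S supp_vec_smult_add[OF ab, of "-s"] by auto
    have lin: "\<Phi> *\<^sub>v (t \<cdot>\<^sub>v a + b) = t \<cdot>\<^sub>v (\<Phi> *\<^sub>v a) + \<Phi> *\<^sub>v b" for t
      using \<Phi> ab by (simp add: mult_add_distrib_mat_vec[OF \<Phi>] mult_mat_vec[OF \<Phi>])
    show ?thesis
      using RIP_sqnorm_bounds(2)[OF rip comb S(3,4)] RIP_sqnorm_bounds(1)[OF rip comb' S(3,4)]
      unfolding lin sqnorm_smult_add[OF \<Phi>ab] sqnorm_smult_add[OF ab] E_def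
      by (simp add: algebra_simps)
  qed
  from nonneg_quadratic_imp_discrim_le[OF _ this] have "E\<^sup>2 \<le> (\<delta> * sqrt (sqnorm a) * sqrt (sqnorm b))\<^sup>2"
    using \<delta> by (simp add: sqnorm_nonneg power_mult_distrib power2_eq_square mult_ac)
  then show ?thesis
    unfolding E_def using \<delta> by (simp add: power2_le_iff_abs_le sqnorm_nonneg)
qed

lemma RIP_correlation_bound:
  assumes \<Phi>: "\<Phi> \<in> carrier_mat M N" and rip: "RIP \<Phi> (K + 1) \<delta>"
    and z: "z \<in> carrier_vec N" "supp_vec z \<subseteq> T" and T: "finite T" "card T \<le> K" and i: "i < N"
  shows "\<bar>(transpose_mat \<Phi> *\<^sub>v (\<Phi> *\<^sub>v z)) $ i - z $ i\<bar> \<le> \<delta> * sqrt (sqnorm z)"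
proof -
  have "card (insert i T) \<le> K + 1" using T by (simp add: card_insert_if)
  then have "\<bar>(\<Phi> *\<^sub>v unit_vec N i) \<bullet> (\<Phi> *\<^sub>v z) - unit_vec N i \<bullet> z\<bar>
      \<le> \<delta> * sqrt (sqnorm (unit_vec N i :: real vec)) * sqrt (sqnorm z)"
    using z T i by (intro RIP_scalar_prod_bound[OF rip \<Phi>]) (auto simp: supp_vec_unit_vec)
  then show ?thesis using \<Phi> z i by (simp add: mult_mat_vec_unit_vec sqnorm_unit_vec)
qed

section \<open>Least squares\<close>

lemma is_lsq_residual_orthogonal:
  assumes \<Phi>: "\<Phi> \<in> carrier_mat M N" and y: "y \<in> carrier_vec M"
    and lsq: "is_lsq \<Phi> y S z" and w: "w \<in> carrier_vec N" "supp_vec w \<subseteq> S"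
  shows "(y - \<Phi> *\<^sub>v z) \<bullet> (\<Phi> *\<^sub>v w) = 0"
proof -
  have z: "z \<in> carrier_vec N" "supp_vec z \<subseteq> S" using lsq \<Phi> unfolding is_lsq_def by auto
  define r where "r = y - \<Phi> *\<^sub>v z"
  have r: "r \<in> carrier_vec M" and \<Phi>w: "\<Phi> *\<^sub>v w \<in> carrier_vec M"
    unfolding r_def using y \<Phi> z w by auto
  have "0 \<le> sqnorm (\<Phi> *\<^sub>v w) * s\<^sup>2 + (- 2 * ((\<Phi> *\<^sub>v w) \<bullet> r)) * s + 0" for s
  proof -
    have "s \<cdot>\<^sub>v w + z \<in> carrier_vec (dim_col \<Phi>)" "supp_vec (s \<cdot>\<^sub>v w + z) \<subseteq> S"
      using w z \<Phi> supp_vec_smult_add[OF w(1) z(1), of s] by auto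
    then have "sqnorm r \<le> sqnorm (y - \<Phi> *\<^sub>v (s \<cdot>\<^sub>v w + z))"
      using lsq unfolding is_lsq_def r_def by blast
    also have "y - \<Phi> *\<^sub>v (s \<cdot>\<^sub>v w + z) = (- s) \<cdot>\<^sub>v (\<Phi> *\<^sub>v w) + r"
      unfolding r_def using \<Phi> y z w
      by (intro eq_vecI) (auto simp: mult_add_distrib_mat_vec[OF \<Phi>] mult_mat_vec[OF \<Phi>])
    finally have "sqnorm r \<le> (- s)\<^sup>2 * sqnorm (\<Phi> *\<^sub>v w) + 2 * (- s) * ((\<Phi> *\<^sub>v w) \<bullet> r) + sqnorm r"
      unfolding sqnorm_smult_add[OF \<Phi>w r] .
    moreover have "(- s)\<^sup>2 * sqnorm (\<Phi> *\<^sub>v w) + 2 * (- s) * ((\<Phi> *\<^sub>v w) \<bullet> r)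
        = sqnorm (\<Phi> *\<^sub>v w) * s\<^sup>2 + (- 2 * ((\<Phi> *\<^sub>v w) \<bullet> r)) * s"
      by (simp add: algebra_simps)
    ultimately show ?thesis by linarith
  qed
  from nonneg_quadratic_imp_discrim_le[OF sqnorm_nonneg this] have "(\<Phi> *\<^sub>v w) \<bullet> r = 0" by simp
  then show ?thesis unfolding r_def[symmetric] using comm_scalar_prod[OF r \<Phi>w] by simp
qed

lemma is_lsq_correlation_vanishes:
  assumes \<Phi>: "\<Phi> \<in> carrier_mat M N" and y: "y \<in> carrier_vec M"
    and lsq: "is_lsq \<Phi> y S z" and i: "i \<in> S" "i < N"
  shows "(transpose_mat \<Phi> *\<^sub>v (y - \<Phi> *\<^sub>v z)) $ i = 0"
proof -
  have r: "y - \<Phi> *\<^sub>v z \<in> carrier_vec M" using \<Phi> by (intro carrier_vecI) auto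
  have "(transpose_mat \<Phi> *\<^sub>v (y - \<Phi> *\<^sub>v z)) $ i = (\<Phi> *\<^sub>v unit_vec N i) \<bullet> (y - \<Phi> *\<^sub>v z)"
    using \<Phi> i(2) by (rule index_transpose_mult_mat_vec)
  also have "\<dots> = (y - \<Phi> *\<^sub>v z) \<bullet> (\<Phi> *\<^sub>v unit_vec N i)"
    using \<Phi> r by (intro comm_scalar_prod[of _ M]) auto
  also have "\<dots> = 0"
    using is_lsq_residual_orthogonal[OF \<Phi> y lsq, of "unit_vec N i"] i by (simp add: supp_vec_unit_vec)
  finally show ?thesis .
qed

lemma is_lsq_residual_le_tail:
  assumes \<Phi>: "\<Phi> \<in> carrier_mat M N" and x: "x \<in> carrier_vec N"
    and lsq: "is_lsq \<Phi> (\<Phi> *\<^sub>v x) S z"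
  shows "sqnorm (\<Phi> *\<^sub>v x - \<Phi> *\<^sub>v z) \<le> sqnorm (\<Phi> *\<^sub>v vec N (\<lambda>i. if i \<in> S then 0 else x $ i))"
proof -
  define w where "w = vec N (\<lambda>i. if i \<in> S then x $ i else 0)"
  have w: "w \<in> carrier_vec N" by (simp add: w_def)
  moreover have "supp_vec w \<subseteq> S" by (auto simp: w_def supp_vec_def split: if_split_asm)
  ultimately have "sqnorm (\<Phi> *\<^sub>v x - \<Phi> *\<^sub>v z) \<le> sqnorm (\<Phi> *\<^sub>v x - \<Phi> *\<^sub>v w)"
    using lsq \<Phi> unfolding is_lsq_def by (metis carrier_matD(2))
  also have "\<Phi> *\<^sub>v x - \<Phi> *\<^sub>v w = \<Phi> *\<^sub>v (x - w)"
    using mult_minus_distrib_mat_vec[OF \<Phi> x w] by simp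
  also have "x - w = vec N (\<lambda>i. if i \<in> S then 0 else x $ i)"
    using x by (intro eq_vecI) (auto simp: w_def)
  finally show ?thesis .
qed

lemma is_lsq_exact_recovery:
  assumes \<Phi>: "\<Phi> \<in> carrier_mat M N" and rip: "RIP \<Phi> m \<delta>" and x: "x \<in> carrier_vec N"
    and lsq: "is_lsq \<Phi> (\<Phi> *\<^sub>v x) S z" and S: "supp_vec x \<subseteq> S" "finite S" "card S \<le> m"
  shows "z = x"
proof -
  have z: "z \<in> carrier_vec N" "supp_vec z \<subseteq> S" using lsq \<Phi> unfolding is_lsq_def by auto
  have "x \<in> carrier_vec (dim_col \<Phi>)" using x \<Phi> by simp
  then have "sqnorm (\<Phi> *\<^sub>v x - \<Phi> *\<^sub>v z) \<le> sqnorm (\<Phi> *\<^sub>v x - \<Phi> *\<^sub>v x)"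
    using lsq S(1) unfolding is_lsq_def by blast
  also have "\<Phi> *\<^sub>v x - \<Phi> *\<^sub>v x = 0\<^sub>v M" using \<Phi> x by (intro minus_cancel_vec) auto
  also have "\<Phi> *\<^sub>v x - \<Phi> *\<^sub>v z = \<Phi> *\<^sub>v (x - z)"
    using mult_minus_distrib_mat_vec[OF \<Phi> x z(1)] by simp
  finally have "sqnorm (\<Phi> *\<^sub>v (x - z)) \<le> 0" by (simp add: sqnorm_def)
  moreover have "x - z \<in> carrier_vec (dim_col \<Phi>)" "supp_vec (x - z) \<subseteq> S"
    using supp_vec_minus[OF x z(1)] S z x \<Phi> by auto
  then have "(1 - \<delta>) * sqnorm (x - z) \<le> sqnorm (\<Phi> *\<^sub>v (x - z))"
    using RIP_sqnorm_bounds(1)[OF rip _ _ S(2,3)] by blast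
  moreover have "\<delta> < 1" using rip unfolding RIP_def by simp
  ultimately have "(1 - \<delta>) * sqnorm (x - z) \<le> 0" "0 < 1 - \<delta>" by linarith+
  then have "sqnorm (x - z) \<le> 0" by (simp add: mult_le_0_iff)
  then have "x - z = 0\<^sub>v N" using x z sqnorm_nonneg[of "x - z"] by (intro sqnorm_eq_0_imp_zero) auto
  show ?thesis
  proof (rule eq_vecI)
    fix i assume "i < dim_vec x"
    then have "(x - z) $ i = 0" using \<open>x - z = 0\<^sub>v N\<close> x by simp
    then show "z $ i = x $ i" using x z \<open>i < dim_vec x\<close> by simp
  qed (use x z in simp)
qed

section \<open>Orthogonal matching pursuit\<close>

lemma omp_run_is_lsq:
  assumes run: "omp_run \<Phi> y n Lam xs" and l: "l \<le> n"
  shows "is_lsq \<Phi> y (Lam l) (xs l)"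
proof (cases l)
  case 0
  have "Lam 0 = {}" "xs 0 = 0\<^sub>v (dim_col \<Phi>)" using run unfolding omp_run_def by auto
  moreover have "w = 0\<^sub>v (dim_col \<Phi>)" if "w \<in> carrier_vec (dim_col \<Phi>)" "supp_vec w \<subseteq> {}" for w
    using supp_vec_empty_imp_zero that by blast
  ultimately show ?thesis unfolding 0 is_lsq_def by (auto simp: supp_vec_def)
next
  case (Suc k)
  then have "omp_step \<Phi> y (Lam k) (xs k) (Lam l) (xs l)" using run l unfolding omp_run_def by auto
  then show ?thesis unfolding omp_step_def Let_def by blast
qed

lemma insert_chain_covers:
  assumes T: "finite T" "card T \<le> n" and C0: "C 0 = {}"
    and step: "\<And>l. l < n \<Longrightarrow> \<exists>j. C (Suc l) = insert j (C l) \<and>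
                 (C l \<subseteq> T \<and> \<not> T \<subseteq> C l \<longrightarrow> j \<in> T - C l)"
  shows "T \<subseteq> C n \<and> finite (C n) \<and> card (C n) \<le> n"
proof -
  have inv: "finite (C l) \<and> card (C l) \<le> l \<and> (T \<subseteq> C l \<or> (C l \<subseteq> T \<and> card (C l) = l))"
    if "l \<le> n" for l
    using that
  proof (induction l)
    case 0
    then show ?case using C0 by simp
  next
    case (Suc l)
    then have IH: "finite (C l)" "card (C l) \<le> l" "T \<subseteq> C l \<or> (C l \<subseteq> T \<and> card (C l) = l)"
      and "l < n" by auto
    then obtain j where j: "C (Suc l) = insert j (C l)"
      and new: "C l \<subseteq> T \<and> \<not> T \<subseteq> C l \<longrightarrow> j \<in> T - C l"
      using step by blast
    show ?case
    proof (cases "T \<subseteq> C l")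
      case True
      then show ?thesis using IH j by (auto simp: card_insert_if)
    next
      case False
      then show ?thesis using IH j new by auto
    qed
  qed
  then have Cn: "finite (C n)" "card (C n) \<le> n" "T \<subseteq> C n \<or> (C n \<subseteq> T \<and> card (C n) = n)"
    by auto
  have "T \<subseteq> C n"
  proof (cases "T \<subseteq> C n")
    case False
    then have "C n \<subseteq> T" "card T \<le> card (C n)" using Cn T by auto
    then show ?thesis using card_seteq[OF T(1)] by blast
  qed
  then show ?thesis using Cn by blast
qed

lemma sqrt_le_of_isometry_ratio:
  fixes \<delta> Z U :: real
  assumes \<delta>: "0 < \<delta>" "\<delta> < 1" and U: "0 \<le> U" and ZU: "(1 - \<delta>) * Z \<le> (1 + \<delta>) * U"
  shows "\<delta> * sqrt Z \<le> \<delta> / (1 - \<delta>) * sqrt U"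
proof -
  have "(1 - \<delta>)\<^sup>2 * Z \<le> (1 - \<delta>) * ((1 + \<delta>) * U)"
    using ZU \<delta> by (simp add: power2_eq_square mult.assoc mult_left_mono)
  also have "\<dots> = (1 - \<delta>\<^sup>2) * U" by (simp add: power2_eq_square algebra_simps)
  also have "\<dots> = U - \<delta>\<^sup>2 * U" by (simp add: algebra_simps)
  also have "\<dots> \<le> U" using U by simp
  finally have "sqrt ((1 - \<delta>)\<^sup>2 * Z) \<le> sqrt U" by simp
  then have "(1 - \<delta>) * sqrt Z \<le> sqrt U" using \<delta> by (simp add: real_sqrt_mult)
  then have "\<delta> / (1 - \<delta>) * ((1 - \<delta>) * sqrt Z) \<le> \<delta> / (1 - \<delta>) * sqrt U"
    using \<delta> by (intro mult_left_mono) auto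
  then show ?thesis using \<delta> by simp
qed

lemma sqrt_sum_squares_le_dominant:
  fixes f :: "'a \<Rightarrow> real"
  assumes R: "finite R" "k \<in> R" "card R \<le> K" and b: "0 \<le> b"
    and small: "\<And>i. i \<in> R - {k} \<Longrightarrow> \<bar>f i\<bar> \<le> b"
  shows "sqrt (\<Sum>i\<in>R. (f i)\<^sup>2) \<le> \<bar>f k\<bar> + sqrt (real K - 1) * b"
proof -
  have "0 < card R" using R card_gt_0_iff by blast
  then have card: "real (card (R - {k})) \<le> real K - 1"
    using R by (simp add: card_Diff_singleton of_nat_diff)
  have "(\<Sum>i\<in>R - {k}. (f i)\<^sup>2) \<le> real (card (R - {k})) * b\<^sup>2"
    using small b by (intro sum_bounded_above) (simp add: abs_le_square_iff[symmetric])
  also have "\<dots> \<le> (real K - 1) * b\<^sup>2" using card by (simp add: mult_right_mono)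
  finally have "(\<Sum>i\<in>R. (f i)\<^sup>2) \<le> (f k)\<^sup>2 + (real K - 1) * b\<^sup>2"
    using R by (simp add: sum.remove)
  then have "sqrt (\<Sum>i\<in>R. (f i)\<^sup>2) \<le> sqrt ((f k)\<^sup>2) + sqrt ((real K - 1) * b\<^sup>2)"
    using card by (intro order_trans[OF _ sqrt_add_le_add_sqrt]) auto
  then show ?thesis using b by (simp add: real_sqrt_mult)
qed

lemma threshold_gap:
  fixes d s \<alpha> a :: real
  assumes d: "0 \<le> d" "2 * d < 1" and s: "0 \<le> s" and \<alpha>: "(1 + 2 * d * s) / (1 - 2 * d) < \<alpha>"
  shows "1 < \<alpha>" and "0 < a \<Longrightarrow> 2 * (d * (a + s * (a / \<alpha>))) < a"
proof -
  have \<alpha>': "1 + 2 * d * s < \<alpha> * (1 - 2 * d)" using \<alpha> d by (simp add: divide_less_eq)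
  show "1 < \<alpha>"
  proof (rule ccontr)
    assume "\<not> 1 < \<alpha>"
    then have "\<alpha> * (1 - 2 * d) \<le> 1 - 2 * d" using mult_right_mono[of \<alpha> 1 "1 - 2 * d"] d by simp
    moreover have "1 < \<alpha> * (1 - 2 * d)" using \<alpha>' d s by (smt (verit) mult_nonneg_nonneg)
    ultimately show False using d by linarith
  qed
  assume a: "0 < a"
  have "2 * (d * (a + s * (a / \<alpha>))) = a / \<alpha> * (2 * d * (\<alpha> + s))"
    using \<open>1 < \<alpha>\<close> by (simp add: field_simps)
  also have "\<dots> < a / \<alpha> * \<alpha>"
    using \<alpha>' a \<open>1 < \<alpha>\<close> by (intro mult_strict_left_mono) (auto simp: algebra_simps)
  also have "\<dots> = a" using \<open>1 < \<alpha>\<close> by simp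
  finally show "2 * (d * (a + s * (a / \<alpha>))) < a" .
qed

lemma magnitudes_separated_tail_energy:
  assumes sep: "magnitudes_separated \<alpha> x" and \<alpha>: "0 < \<alpha>"
    and R: "finite R" "R \<subseteq> supp_vec x" "card R \<le> K" "k \<in> R"
    and kmax: "\<And>i. i \<in> R \<Longrightarrow> \<bar>x $ i\<bar> \<le> \<bar>x $ k\<bar>"
  shows "sqrt (\<Sum>i\<in>R. (x $ i)\<^sup>2) \<le> \<bar>x $ k\<bar> + sqrt (real K - 1) * (\<bar>x $ k\<bar> / \<alpha>)"
proof (rule sqrt_sum_squares_le_dominant[OF R(1,4,3)])
  show "0 \<le> \<bar>x $ k\<bar> / \<alpha>" using \<alpha> by simp
  fix i assume i: "i \<in> R - {k}"
  then have "\<alpha> * \<bar>x $ i\<bar> \<le> \<bar>x $ k\<bar>"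
    using sep kmax R unfolding magnitudes_separated_def supp_vec_def by blast
  then show "\<bar>x $ i\<bar> \<le> \<bar>x $ k\<bar> / \<alpha>" using \<alpha> by (simp add: field_simps)
qed

lemma is_lsq_correlation_error:
  fixes \<Phi> :: "real mat"
  assumes \<Phi>: "\<Phi> \<in> carrier_mat M N" and rip: "RIP \<Phi> (K + 1) \<delta>"
    and x: "x \<in> carrier_vec N" "l0 x \<le> K"
    and lsq: "is_lsq \<Phi> (\<Phi> *\<^sub>v x) Lam xl" and Lam: "Lam \<subseteq> supp_vec x" and i: "i < N"
  shows "\<bar>(transpose_mat \<Phi> *\<^sub>v (\<Phi> *\<^sub>v x - \<Phi> *\<^sub>v xl)) $ i - (x - xl) $ i\<bar>
    \<le> \<delta> / (1 - \<delta>) * sqrt (\<Sum>k\<in>supp_vec x - Lam. (x $ k)\<^sup>2)"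
proof -
  define T where "T = supp_vec x"
  define z where "z = x - xl"
  define u where "u = vec N (\<lambda>i. if i \<in> Lam then 0 else x $ i)"
  have \<delta>: "0 < \<delta>" "\<delta> < 1" using rip unfolding RIP_def by auto
  have T: "finite T" "card T \<le> K" "T \<subseteq> {..<N}"
    using x by (auto simp: T_def l0_def supp_vec_def)
  have x_off: "\<And>i. i \<notin> T \<Longrightarrow> i < N \<Longrightarrow> x $ i = 0" using x by (auto simp: T_def supp_vec_def)
  have xl: "xl \<in> carrier_vec N" "supp_vec xl \<subseteq> Lam" using lsq \<Phi> by (auto simp: is_lsq_def)
  have z: "z \<in> carrier_vec N" "supp_vec z \<subseteq> T"
    using x xl Lam supp_vec_minus[OF x(1) xl(1)] by (auto simp: z_def T_def)
  have \<Phi>z: "\<Phi> *\<^sub>v z = \<Phi> *\<^sub>v x - \<Phi> *\<^sub>v xl"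
    unfolding z_def using mult_minus_distrib_mat_vec[OF \<Phi> x(1) xl(1)] by simp
  have u: "sqnorm u = (\<Sum>i\<in>T - Lam. (x $ i)\<^sup>2)"
  proof -
    have "sqnorm u = (\<Sum>i<N. if i \<in> T - Lam then (x $ i)\<^sup>2 else 0)"
      unfolding sqnorm_def u_def using x_off by (intro sum.cong) auto
    also have "\<dots> = (\<Sum>i\<in>T - Lam. (x $ i)\<^sup>2)"
      using T by (intro sum.mono_neutral_cong_right) auto
    finally show ?thesis .
  qed
  have "(1 - \<delta>) * sqnorm z \<le> sqnorm (\<Phi> *\<^sub>v z)"
    using RIP_sqnorm_bounds(1)[OF rip _ z(2) T(1)] z \<Phi> T by auto
  also have "\<dots> \<le> sqnorm (\<Phi> *\<^sub>v u)"
    using is_lsq_residual_le_tail[OF \<Phi> x(1) lsq] unfolding \<Phi>z u_def .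
  also have "\<dots> \<le> (1 + \<delta>) * sqnorm u"
  proof -
    have "supp_vec u \<subseteq> T" using x_off by (force simp: u_def supp_vec_def split: if_split_asm)
    then show ?thesis using RIP_sqnorm_bounds(2)[OF rip _ _ T(1)] \<Phi> T(2) by (auto simp: u_def)
  qed
  finally have "\<delta> * sqrt (sqnorm z) \<le> \<delta> / (1 - \<delta>) * sqrt (sqnorm u)"
    using \<delta> by (intro sqrt_le_of_isometry_ratio) (auto simp: sqnorm_nonneg)
  moreover have "\<bar>(transpose_mat \<Phi> *\<^sub>v (\<Phi> *\<^sub>v x - \<Phi> *\<^sub>v xl)) $ i - z $ i\<bar> \<le> \<delta> * sqrt (sqnorm z)"
    using RIP_correlation_bound[OF \<Phi> rip z T(1,2) i] unfolding \<Phi>z .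
  ultimately show ?thesis unfolding u T_def z_def by linarith
qed

lemma omp_step_selects_support:
  fixes \<Phi> :: "real mat"
  assumes \<Phi>: "\<Phi> \<in> carrier_mat M N" and rip: "RIP \<Phi> (K + 1) \<delta>" and \<delta>3: "\<delta> < 1 / 3"
    and x: "x \<in> carrier_vec N" "l0 x \<le> K"
    and \<alpha>: "(1 + 2 * (\<delta> / (1 - \<delta>)) * sqrt (real K - 1)) / (1 - 2 * (\<delta> / (1 - \<delta>))) < \<alpha>"
    and ratio: "\<forall>j \<in> {1..K-1}. \<bar>mag_ord x j\<bar> \<ge> \<alpha> * \<bar>mag_ord x (j + 1)\<bar>"
    and lsq: "is_lsq \<Phi> (\<Phi> *\<^sub>v x) Lam xl" and Lam: "Lam \<subseteq> supp_vec x" "\<not> supp_vec x \<subseteq> Lam"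
    and j: "j < N"
    and jmax: "\<And>i. i < N \<Longrightarrow> \<bar>(transpose_mat \<Phi> *\<^sub>v (\<Phi> *\<^sub>v x - \<Phi> *\<^sub>v xl)) $ i\<bar>
                              \<le> \<bar>(transpose_mat \<Phi> *\<^sub>v (\<Phi> *\<^sub>v x - \<Phi> *\<^sub>v xl)) $ j\<bar>"
  shows "j \<in> supp_vec x - Lam"
proof -
  define T where "T = supp_vec x"
  define h where "h = transpose_mat \<Phi> *\<^sub>v (\<Phi> *\<^sub>v x - \<Phi> *\<^sub>v xl)"
  define d where "d = \<delta> / (1 - \<delta>)"
  define s where "s = sqrt (real K - 1)"
  have d: "0 \<le> d" "2 * d < 1" using rip \<delta>3 by (auto simp: RIP_def d_def field_simps)
  have T: "finite T" "card T \<le> K" "T \<subseteq> {..<N}"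
    using x by (auto simp: T_def l0_def supp_vec_def)
  have R: "finite (T - Lam)" "T - Lam \<noteq> {}" using T Lam by (auto simp: T_def)
  obtain k where k: "k \<in> T - Lam" and kMax: "Max ((\<lambda>i. \<bar>x $ i\<bar>) ` (T - Lam)) = \<bar>x $ k\<bar>"
    using obtains_MAX[OF R] by blast
  have kN: "k < N" using k T by auto
  define a where "a = \<bar>x $ k\<bar>"
  have a: "0 < a" using k by (auto simp: a_def T_def supp_vec_def)
  have "0 < card T" using k T(1) by (auto simp: card_gt_0_iff)
  then have s: "0 \<le> s" using T by (simp add: s_def)
  define E where "E = d * (a + s * (a / \<alpha>))"
  have \<alpha>_gap: "1 < \<alpha>" "2 * E < a"
    using threshold_gap[OF d s] \<alpha> a unfolding E_def d_def s_def by auto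
  have kmax: "\<bar>x $ i\<bar> \<le> \<bar>x $ k\<bar>" if "i \<in> T - Lam" for i
    using that R kMax[symmetric] by (simp add: Max_ge)
  have "card (T - Lam) \<le> K" using T by (meson Diff_subset card_mono order_trans)
  then have "sqrt (\<Sum>i\<in>T - Lam. (x $ i)\<^sup>2) \<le> a + s * (a / \<alpha>)"
    using magnitudes_separated_tail_energy[OF mag_ord_ratio_imp_separated[OF ratio x(2)] _ R(1)]
      \<alpha>_gap k kmax unfolding a_def s_def T_def by auto
  then have close: "\<bar>h $ i - (x - xl) $ i\<bar> \<le> E" if "i < N" for i
    using is_lsq_correlation_error[OF \<Phi> rip x lsq Lam(1) that] d
    unfolding h_def E_def d_def[symmetric] T_def by (meson mult_left_mono order_trans)
  have xl_off: "(x - xl) $ i = x $ i" if "i < N" "i \<notin> Lam" for i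
    using lsq that \<Phi> x by (auto simp: is_lsq_def supp_vec_def)
  have E0: "0 \<le> E" using close[OF kN] by (meson abs_ge_zero order_trans)
  have "a - E \<le> \<bar>h $ k\<bar>" using close[OF kN] xl_off[OF kN] k by (auto simp: a_def)
  then have big: "E < \<bar>h $ j\<bar>" using jmax[OF kN] \<alpha>_gap unfolding h_def by linarith
  show ?thesis
  proof (rule ccontr)
    assume "j \<notin> supp_vec x - Lam"
    then consider "j \<in> Lam" | "j \<notin> T" "j \<notin> Lam" by (auto simp: T_def)
    then show False
    proof cases
      case 1
      then have "h $ j = 0"
        unfolding h_def using is_lsq_correlation_vanishes[OF \<Phi> _ lsq 1 j] \<Phi> x by auto
      then show False using big E0 by simp
    next
      case 2
      then have "x $ j = 0" using x j by (auto simp: T_def supp_vec_def)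
      then show False using close[OF j] xl_off[OF j] 2 big by auto
    qed
  qed
qed

theorem theorem2:
  fixes \<Phi> :: "real mat" and x :: "real vec" and M N K :: nat and \<delta> \<alpha> :: real
    and Lam :: "nat \<Rightarrow> nat set" and xs :: "nat \<Rightarrow> real vec"
  assumes "\<Phi> \<in> carrier_mat M N"
    and "K \<ge> 1"
    and "RIP \<Phi> (K + 1) \<delta>"
    and "\<delta> < 1 / 3"
    and "x \<in> carrier_vec N"
    and "l0 x \<le> K"
    and "\<alpha> > (1 + 2 * (\<delta> / (1 - \<delta>)) * sqrt (real K - 1)) / (1 - 2 * (\<delta> / (1 - \<delta>)))"
    and "\<forall>j \<in> {1..K-1}. \<bar>mag_ord x j\<bar> \<ge> \<alpha> * \<bar>mag_ord x (j + 1)\<bar>"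
    and "omp_run \<Phi> (\<Phi> *\<^sub>v x) K Lam xs"
  shows "xs K = x"
proof -
  note \<Phi> = assms(1) and rip = assms(3) and x = assms(5,6) and run = assms(9)
  have T: "finite (supp_vec x)" "card (supp_vec x) \<le> K"
    using x by (auto simp: l0_def supp_vec_def)
  have "supp_vec x \<subseteq> Lam K \<and> finite (Lam K) \<and> card (Lam K) \<le> K"
  proof (rule insert_chain_covers[OF T])
    show "Lam 0 = {}" using run by (simp add: omp_run_def)
    fix l assume "l < K"
    then obtain j where j: "j < N" "Lam (Suc l) = insert j (Lam l)"
      and jmax: "\<And>i. i < N \<Longrightarrow> \<bar>(transpose_mat \<Phi> *\<^sub>v (\<Phi> *\<^sub>v x - \<Phi> *\<^sub>v xs l)) $ i\<bar>
                              \<le> \<bar>(transpose_mat \<Phi> *\<^sub>v (\<Phi> *\<^sub>v x - \<Phi> *\<^sub>v xs l)) $ j\<bar>"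
      using run \<Phi> unfolding omp_run_def omp_step_def Let_def by auto
    moreover have "is_lsq \<Phi> (\<Phi> *\<^sub>v x) (Lam l) (xs l)"
      using omp_run_is_lsq[OF run] \<open>l < K\<close> by simp
    ultimately show "\<exists>j. Lam (Suc l) = insert j (Lam l) \<and>
        (Lam l \<subseteq> supp_vec x \<and> \<not> supp_vec x \<subseteq> Lam l \<longrightarrow> j \<in> supp_vec x - Lam l)"
      using omp_step_selects_support[OF \<Phi> rip assms(4) x assms(7,8)] by blast
  qed
  then show ?thesis
    using is_lsq_exact_recovery[OF \<Phi> rip assms(5) omp_run_is_lsq[OF run order_refl]] by auto
qed

end
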